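(* Let $(D_i)_{i\in\mathbb N}$ be a sequence of nontrivial discrete groups, $G=\prod_{i\in\mathbb N}D_i$ with the product topology, and $H=\{g\in G:\{i:g(i)\neq e_{D_i}\}\text{ finite}\}$ with the topology induced from $G$. Then: (1) every sequence in $G$ converging to the neutral element $e$ is hyper-multipliable in $G$ (in particular hyper-converging); (2) every sequence in $H$ which is super-multipliable in $H$ is eventually neutral; (3) every sequence in $H$ which is hyper-multipliable in $H$ is eventually neutral.
   Context: $\prod_{k=1}^n a_k=a_1\cdots a_n$. A sequence $(g_n)$ in a topological group with neutral element $e$ is: eventually neutral if $\{n:g_n\ne e\}$ is finite; hyper-multipliable if for every integer sequence $(m_n)$, $\left(\prod_{k=1}^n g_k^{m_k}\right)_n$ converges in the group; super-multipliable if the same holds for all $(m_n)$ with values in $\{0,1\}$; hyper-converging if $g_n^{m_n}\to e$ for every integer sequence $(m_n)$. *)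

theory Defs
  imports "HOL-Analysis.Analysis" "HOL-Algebra.Group"
begin

definition ProdGrp :: "(nat \<Rightarrow> 'a monoid) \<Rightarrow> (nat \<Rightarrow> 'a) monoid" where
  "ProdGrp D = \<lparr> carrier = PiE UNIV (\<lambda>i. carrier (D i)),
                 mult = (\<lambda>f g. \<lambda>i. f i \<otimes>\<^bsub>D i\<^esub> g i),
                 one = (\<lambda>i. \<one>\<^bsub>D i\<^esub>) \<rparr>"

definition ProdTop :: "(nat \<Rightarrow> 'a monoid) \<Rightarrow> (nat \<Rightarrow> 'a) topology" where
  "ProdTop D = product_topology (\<lambda>i. discrete_topology (carrier (D i))) UNIV"

definition FinSupp :: "(nat \<Rightarrow> 'a monoid) \<Rightarrow> (nat \<Rightarrow> 'a) set" where
  "FinSupp D = {g \<in> carrier (ProdGrp D). finite {i. g i \<noteq> \<one>\<^bsub>D i\<^esub>}}"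

definition SumGrp :: "(nat \<Rightarrow> 'a monoid) \<Rightarrow> (nat \<Rightarrow> 'a) monoid" where
  "SumGrp D = (ProdGrp D)\<lparr>carrier := FinSupp D\<rparr>"

definition SumTop :: "(nat \<Rightarrow> 'a monoid) \<Rightarrow> (nat \<Rightarrow> 'a) topology" where
  "SumTop D = subtopology (ProdTop D) (FinSupp D)"

fun pprod :: "('b, 'c) monoid_scheme \<Rightarrow> (nat \<Rightarrow> 'b) \<Rightarrow> nat \<Rightarrow> 'b" where
  "pprod G a 0 = \<one>\<^bsub>G\<^esub>"
| "pprod G a (Suc n) = pprod G a n \<otimes>\<^bsub>G\<^esub> a n"

definition eventually_neutral :: "('b, 'c) monoid_scheme \<Rightarrow> (nat \<Rightarrow> 'b) \<Rightarrow> bool" where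
  "eventually_neutral G g \<longleftrightarrow> finite {n. g n \<noteq> \<one>\<^bsub>G\<^esub>}"

definition hyper_multipliable ::
  "('b, 'c) monoid_scheme \<Rightarrow> 'b topology \<Rightarrow> (nat \<Rightarrow> 'b) \<Rightarrow> bool" where
  "hyper_multipliable G X g \<longleftrightarrow>
     (\<forall>m :: nat \<Rightarrow> int. \<exists>l. limitin X (\<lambda>n. pprod G (\<lambda>k. g k [^]\<^bsub>G\<^esub> m k) n) l sequentially)"

definition super_multipliable ::
  "('b, 'c) monoid_scheme \<Rightarrow> 'b topology \<Rightarrow> (nat \<Rightarrow> 'b) \<Rightarrow> bool" where
  "super_multipliable G X g \<longleftrightarrow>
     (\<forall>m :: nat \<Rightarrow> int. (\<forall>k. m k \<in> {0, 1}) \<longrightarrow>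
        (\<exists>l. limitin X (\<lambda>n. pprod G (\<lambda>k. g k [^]\<^bsub>G\<^esub> m k) n) l sequentially))"

definition hyper_converging ::
  "('b, 'c) monoid_scheme \<Rightarrow> 'b topology \<Rightarrow> (nat \<Rightarrow> 'b) \<Rightarrow> bool" where
  "hyper_converging G X g \<longleftrightarrow>
     (\<forall>m :: nat \<Rightarrow> int. limitin X (\<lambda>n. g n [^]\<^bsub>G\<^esub> m n) \<one>\<^bsub>G\<^esub> sequentially)"

end

theory Submission
  imports Defs "HOL-Algebra.Product_Groups"
begin

(* In the product topology of discrete groups, a sequence converges iff it is
   eventually constant in every coordinate.  Hence:
   (1) If g_n -> e in G, then in each coordinate i only finitely many g_n(i) differ from e,
       so the same holds for the powers g_n^(m_n); every coordinate of the partial products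
       is eventually constant, i.e. the products converge, and g_n^(m_n) -> e.
   (2) Let g be super-multipliable in H but not eventually neutral.  Taking all exponents 1,
       the partial products converge, so in every coordinate g_n(i) = e eventually.  A greedy
       choice then yields a subsequence g_(K j) of non-neutral elements with pairwise disjoint
       supports.  Multiplying exactly the terms g_(K j) gives a limit l in H, and l agrees with
       g_(K j) on its support; so the support of l contains infinitely many disjoint nonempty
       sets, contradicting l in H.
   (3) Hyper-multipliable sequences are super-multipliable, so (3) follows from (2). *)

definition coord_support :: "(nat \<Rightarrow> 'a monoid) \<Rightarrow> (nat \<Rightarrow> 'a) \<Rightarrow> nat set" where
  "coord_support D x = {i. x i \<noteq> \<one>\<^bsub>D i\<^esub>}"

lemma ProdGrp_eq_product_group: "ProdGrp D = product_group UNIV D"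
  by (simp add: ProdGrp_def product_group_def restrict_def)

lemma carrier_ProdGrp: "x \<in> carrier (ProdGrp D) \<longleftrightarrow> (\<forall>i. x i \<in> carrier (D i))"
  by (simp add: ProdGrp_def PiE_iff)

lemma one_ProdGrp: "\<one>\<^bsub>ProdGrp D\<^esub> = (\<lambda>i. \<one>\<^bsub>D i\<^esub>)"
  by (simp add: ProdGrp_def)

lemma group_ProdGrp: "(\<And>i. group (D i)) \<Longrightarrow> group (ProdGrp D)"
  by (simp add: ProdGrp_eq_product_group)

text \<open>Each projection is a homomorphism, so integer powers are computed coordinatewise.\<close>
lemma projection_hom: "(\<lambda>x. x i) \<in> hom (ProdGrp D) (D i)"
  by (auto simp: hom_def ProdGrp_def)

lemma int_pow_coord:
  assumes "\<And>i. group (D i)" and "x \<in> carrier (ProdGrp D)"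
  shows "(x [^]\<^bsub>ProdGrp D\<^esub> (z::int)) i = x i [^]\<^bsub>D i\<^esub> z"
  using hom_int_pow[OF projection_hom assms(2) group_ProdGrp assms(1)] assms(1) .

lemma pprod_coord: "pprod (ProdGrp D) a n i = pprod (D i) (\<lambda>k. a k i) n"
  by (induction n) (simp_all add: ProdGrp_def)

lemma pprod_SumGrp: "pprod (SumGrp D) a n = pprod (ProdGrp D) a n"
  by (induction n) (simp_all add: SumGrp_def)

lemma one_SumGrp: "\<one>\<^bsub>SumGrp D\<^esub> = (\<lambda>i. \<one>\<^bsub>D i\<^esub>)"
  by (simp add: SumGrp_def ProdGrp_def)

lemma carrier_SumGrp: "carrier (SumGrp D) = FinSupp D"
  by (simp add: SumGrp_def)

lemma int_pow_one_SumGrp: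
  assumes "\<And>i. group (D i)" and "x \<in> carrier (ProdGrp D)"
  shows "x [^]\<^bsub>SumGrp D\<^esub> (1::int) = x"
proof -
  have "x [^]\<^bsub>SumGrp D\<^esub> (1::int) = x [^]\<^bsub>SumGrp D\<^esub> (1::nat)"
    using int_pow_int[of "SumGrp D" x 1] by simp
  also have "\<dots> = x"
    using assms by (simp add: SumGrp_def ProdGrp_def PiE_iff group.is_monoid monoid.l_one)
  finally show ?thesis .
qed

lemma limitin_discrete_iff:
  "limitin (discrete_topology U) f l F \<longleftrightarrow> l \<in> U \<and> eventually (\<lambda>x. f x = l) F"
proof
  assume lim: "limitin (discrete_topology U) f l F"
  then have "l \<in> U" by (simp add: limitin_def)
  then have "openin (discrete_topology U) {l}" by simp
  with lim have "eventually (\<lambda>x. f x \<in> {l}) F"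
    unfolding limitin_def using \<open>l \<in> U\<close> by blast
  with \<open>l \<in> U\<close> show "l \<in> U \<and> eventually (\<lambda>x. f x = l) F" by simp
next
  assume "l \<in> U \<and> eventually (\<lambda>x. f x = l) F"
  then show "limitin (discrete_topology U) f l F"
    unfolding limitin_def by (auto elim: eventually_mono)
qed

lemma limitin_ProdTop_iff:
  assumes "\<And>n. f n \<in> carrier (ProdGrp D)"
  shows "limitin (ProdTop D) f l F \<longleftrightarrow>
           l \<in> carrier (ProdGrp D) \<and> (\<forall>i. eventually (\<lambda>n. f n i = l i) F)"
  using assms
  by (auto simp: ProdTop_def limitin_componentwise limitin_discrete_iff
      topspace_product_topology carrier_ProdGrp ProdGrp_def)

lemma pprod_closed:
  assumes "monoid G" and "\<And>k. a k \<in> carrier G"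
  shows "pprod G a n \<in> carrier G"
  by (induction n) (simp_all add: assms monoid.m_closed)

lemma pprod_eventually_const:
  assumes G: "monoid G" and a: "\<And>k. a k \<in> carrier G"
    and neutral: "\<And>k. N \<le> k \<Longrightarrow> a k = \<one>\<^bsub>G\<^esub>" and "N \<le> n"
  shows "pprod G a n = pprod G a N"
  using \<open>N \<le> n\<close>
proof (induction n rule: dec_induct)
  case (step n)
  then show ?case using neutral[of n] monoid.r_one[OF G pprod_closed[OF G a]] by simp
qed simp

lemma pprod_single_factor:
  assumes G: "monoid G" and "a p \<in> carrier G" and neutral: "\<And>k. k \<noteq> p \<Longrightarrow> a k = \<one>\<^bsub>G\<^esub>"
  shows "pprod G a n = (if p < n then a p else \<one>\<^bsub>G\<^esub>)"
proof (induction n)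
  case (Suc n)
  then show ?case
    using assms neutral[of n] by (auto simp: monoid.l_one monoid.r_one less_Suc_eq)
qed simp

lemma pprod_selected_single_limit:
  assumes G: "monoid G" and "p \<in> S" and "b p \<in> carrier G"
    and others: "\<And>k. k \<in> S \<Longrightarrow> k \<noteq> p \<Longrightarrow> b k = \<one>\<^bsub>G\<^esub>"
    and lim: "eventually (\<lambda>n. pprod G (\<lambda>k. if k \<in> S then b k else \<one>\<^bsub>G\<^esub>) n = c) sequentially"
  shows "c = b p"
proof -
  have "pprod G (\<lambda>k. if k \<in> S then b k else \<one>\<^bsub>G\<^esub>) n = (if p < n then b p else \<one>\<^bsub>G\<^esub>)" for n
    using pprod_single_factor[OF G, where a="\<lambda>k. if k \<in> S then b k else \<one>\<^bsub>G\<^esub>" and p=p]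
      assms by simp
  with lim have "eventually (\<lambda>n. (if p < n then b p else \<one>\<^bsub>G\<^esub>) = c) sequentially" by simp
  moreover have "eventually (\<lambda>n. p < n) sequentially" by (rule eventually_gt_at_top)
  ultimately have "eventually (\<lambda>n. b p = c) sequentially" by eventually_elim simp
  then show ?thesis by simp
qed

lemma pprod_eventually_const_imp_factors:
  assumes G: "group G" and a: "\<And>k. a k \<in> carrier G"
    and const: "eventually (\<lambda>n. pprod G a n = c) sequentially"
  shows "eventually (\<lambda>n. a n = \<one>\<^bsub>G\<^esub>) sequentially"
proof -
  from const obtain N where N: "\<And>n. N \<le> n \<Longrightarrow> pprod G a n = c"
    unfolding eventually_sequentially by blast
  have "a n = \<one>\<^bsub>G\<^esub>" if "N \<le> n" for n
  proof -
    have "pprod G a (Suc n) = pprod G a n"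
      using N[of n] N[of "Suc n"] that by simp
    then have "pprod G a n \<otimes>\<^bsub>G\<^esub> a n = pprod G a n" by simp
    then show ?thesis
      using group.l_cancel_one[OF G pprod_closed[OF group.is_monoid[OF G] a] a[of n]] by simp
  qed
  then show ?thesis unfolding eventually_sequentially by blast
qed

section \<open>Selecting a subsequence with disjoint supports\<close>

text \<open>Given finite sets A n such that every point eventually leaves them and infinitely many
  A n are nonempty, one can greedily pick infinitely many nonempty, pairwise disjoint A (K j):
  after choosing up to index b, jump past the point from which no element of the finitely many
  earlier sets reappears.\<close>
lemma disjoint_subsequence:
  fixes A :: "nat \<Rightarrow> 'i set"
  assumes fin: "\<And>n. finite (A n)"
    and vanish: "\<And>i. eventually (\<lambda>n. i \<notin> A n) sequentially"
    and inf: "infinite {n. A n \<noteq> {}}"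
  obtains K :: "nat \<Rightarrow> nat" where "\<And>j. A (K j) \<noteq> {}"
    and "\<And>j j'. j \<noteq> j' \<Longrightarrow> A (K j) \<inter> A (K j') = {}"
proof -
  define Good where "Good b n \<longleftrightarrow> b < n \<and> A n \<noteq> {} \<and> (\<forall>q\<ge>n. A q \<inter> (\<Union>p\<le>b. A p) = {})"
    for b n
  have good_exists: "\<exists>n. Good b n" for b
  proof -
    have "finite (\<Union>p\<le>b. A p)" using fin by simp
    then have "eventually (\<lambda>q. \<forall>i\<in>(\<Union>p\<le>b. A p). i \<notin> A q) sequentially"
      using vanish by (intro eventually_ball_finite) auto
    then obtain M where M: "\<And>q. M \<le> q \<Longrightarrow> A q \<inter> (\<Union>p\<le>b. A p) = {}"
      unfolding eventually_sequentially by blast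
    obtain n where "max M (Suc b) \<le> n" "A n \<noteq> {}"
      using inf unfolding infinite_nat_iff_unbounded_le by blast
    then have "Good b n" using M by (simp add: Good_def)
    then show ?thesis ..
  qed
  define K where "K = rec_nat (SOME n. A n \<noteq> {}) (\<lambda>_ b. SOME n. Good b n)"
  have K_Suc: "Good (K j) (K (Suc j))" for j
    unfolding K_def using someI_ex[OF good_exists] by simp
  have nonempty: "A (K j) \<noteq> {}" for j
  proof (cases j)
    case 0
    have "\<exists>n. A n \<noteq> {}" using inf not_finite_existsD by blast
    then have "A (SOME n. A n \<noteq> {}) \<noteq> {}" by (rule someI_ex)
    then show ?thesis by (simp add: K_def 0)
  next
    case (Suc j')
    then show ?thesis using K_Suc[of j'] by (simp add: Good_def)
  qed
  have "strict_mono K"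
    using K_Suc by (simp add: strict_mono_Suc_iff Good_def)
  have disjoint_lt: "A (K j) \<inter> A (K j') = {}" if "j < j'" for j j'
  proof -
    obtain j'' where j': "j' = Suc j''" and "j \<le> j''"
      using \<open>j < j'\<close> by (cases j') auto
    have "K j \<le> K j''" using \<open>strict_mono K\<close> \<open>j \<le> j''\<close> by (rule strict_mono_leD)
    then have "A (K j) \<subseteq> (\<Union>p\<le>K j''. A p)" by auto
    moreover have "\<forall>q\<ge>K j'. A q \<inter> (\<Union>p\<le>K j''. A p) = {}"
      using K_Suc[of j''] by (simp add: Good_def j')
    then have "A (K j') \<inter> (\<Union>p\<le>K j''. A p) = {}"
      using order_refl by blast
    ultimately show ?thesis by blast
  qed
  show ?thesis
  proof (rule that[OF nonempty])
    fix j j' :: nat assume "j \<noteq> j'"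
    then consider "j < j'" | "j' < j" by linarith
    then show "A (K j) \<inter> A (K j') = {}"
      using disjoint_lt[of j j'] disjoint_lt[of j' j] by cases (simp_all add: Int_commute)
  qed
qed

lemma disjoint_family_union_infinite:
  fixes B :: "nat \<Rightarrow> 'i set"
  assumes nonempty: "\<And>j. B j \<noteq> {}" and disjoint: "\<And>j j'. j \<noteq> j' \<Longrightarrow> B j \<inter> B j' = {}"
  shows "infinite (\<Union>j. B j)"
proof
  assume "finite (\<Union>j. B j)"
  moreover have "range B \<subseteq> Pow (\<Union>j. B j)" by blast
  ultimately have "finite (range B)" by (meson finite_Pow_iff finite_subset)
  moreover have "inj B"
  proof (rule injI)
    fix j j' assume "B j = B j'"
    then show "j = j'" using nonempty[of j] disjoint[of j j'] by auto
  qed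
  ultimately show False using finite_imageD by fastforce
qed

section \<open>Part (1): null sequences of the full product\<close>

lemma ProdTop_products_converge:
  assumes grp: "\<And>i. group (D i)" and a: "\<And>k. a k \<in> carrier (ProdGrp D)"
    and vanish: "\<And>i. eventually (\<lambda>k. a k i = \<one>\<^bsub>D i\<^esub>) sequentially"
  shows "\<exists>l. limitin (ProdTop D) (\<lambda>n. pprod (ProdGrp D) a n) l sequentially"
proof -
  have mon: "monoid (D i)" for i using grp group.is_monoid by blast
  have ai: "a k i \<in> carrier (D i)" for k i using a by (simp add: carrier_ProdGrp)
  have "\<forall>i. \<exists>M. \<forall>k\<ge>M. a k i = \<one>\<^bsub>D i\<^esub>"
    using vanish by (simp add: eventually_sequentially)
  then obtain N where N: "\<And>i k. N i \<le> k \<Longrightarrow> a k i = \<one>\<^bsub>D i\<^esub>" by metis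
  define l where "l i = pprod (D i) (\<lambda>k. a k i) (N i)" for i
  have products: "pprod (ProdGrp D) a n \<in> carrier (ProdGrp D)" for n
    using pprod_closed[OF group.is_monoid[OF group_ProdGrp[where D=D, OF grp]] a] .
  have "pprod (D i) (\<lambda>k. a k i) n \<in> carrier (D i)" for i n
    by (rule pprod_closed[OF mon ai])
  then have "l \<in> carrier (ProdGrp D)"
    unfolding carrier_ProdGrp l_def by blast
  moreover have "eventually (\<lambda>n. pprod (ProdGrp D) a n i = l i) sequentially" for i
  proof -
    have "pprod (D i) (\<lambda>k. a k i) n = l i" if "N i \<le> n" for n
      unfolding l_def using mon ai N that by (rule pprod_eventually_const)
    then show ?thesis unfolding pprod_coord eventually_sequentially by blast
  qed
  ultimately show ?thesis
    using limitin_ProdTop_iff[where D=D and f="\<lambda>n. pprod (ProdGrp D) a n", OF products] by blast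
qed

lemma null_sequence_powers_vanish:
  fixes m :: "nat \<Rightarrow> int"
  assumes grp: "\<And>i. group (D i)" and g: "\<And>n. g n \<in> carrier (ProdGrp D)"
    and null: "limitin (ProdTop D) g \<one>\<^bsub>ProdGrp D\<^esub> sequentially"
  shows "eventually (\<lambda>k. (g k [^]\<^bsub>ProdGrp D\<^esub> m k) i = \<one>\<^bsub>D i\<^esub>) sequentially"
proof -
  have "eventually (\<lambda>k. g k i = \<one>\<^bsub>D i\<^esub>) sequentially"
    using null limitin_ProdTop_iff[where D=D and f=g, OF g] by (simp add: one_ProdGrp)
  then show ?thesis
  proof eventually_elim
    case (elim k)
    then show ?case
      using int_pow_coord[where D=D and x="g k", OF grp g] by (simp add: group.int_pow_one grp)
  qed
qed

lemma null_sequence_hyper_multipliable: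
  assumes grp: "\<And>i. group (D i)" and g: "\<And>n. g n \<in> carrier (ProdGrp D)"
    and null: "limitin (ProdTop D) g \<one>\<^bsub>ProdGrp D\<^esub> sequentially"
  shows "hyper_multipliable (ProdGrp D) (ProdTop D) g"
  unfolding hyper_multipliable_def
proof
  fix m :: "nat \<Rightarrow> int"
  have "g k [^]\<^bsub>ProdGrp D\<^esub> m k \<in> carrier (ProdGrp D)" for k
    using group.int_pow_closed[OF group_ProdGrp[where D=D, OF grp] g] .
  then show "\<exists>l. limitin (ProdTop D)
      (\<lambda>n. pprod (ProdGrp D) (\<lambda>k. g k [^]\<^bsub>ProdGrp D\<^esub> m k) n) l sequentially"
    by (rule ProdTop_products_converge[where D=D, OF grp])
      (rule null_sequence_powers_vanish[where D=D, OF grp g null])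
qed

lemma null_sequence_hyper_converging:
  assumes grp: "\<And>i. group (D i)" and g: "\<And>n. g n \<in> carrier (ProdGrp D)"
    and null: "limitin (ProdTop D) g \<one>\<^bsub>ProdGrp D\<^esub> sequentially"
  shows "hyper_converging (ProdGrp D) (ProdTop D) g"
  unfolding hyper_converging_def
proof
  fix m :: "nat \<Rightarrow> int"
  have "g k [^]\<^bsub>ProdGrp D\<^esub> m k \<in> carrier (ProdGrp D)" for k
    using group.int_pow_closed[OF group_ProdGrp[where D=D, OF grp] g] .
  moreover have "\<one>\<^bsub>ProdGrp D\<^esub> \<in> carrier (ProdGrp D)"
    using group.is_monoid[OF group_ProdGrp[where D=D, OF grp]] by (rule monoid.one_closed)
  moreover have "\<forall>i. eventually (\<lambda>n. (g n [^]\<^bsub>ProdGrp D\<^esub> m n) i = \<one>\<^bsub>ProdGrp D\<^esub> i) sequentially"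
    using null_sequence_powers_vanish[where D=D, OF grp g null] by (simp add: one_ProdGrp)
  ultimately show "limitin (ProdTop D) (\<lambda>n. g n [^]\<^bsub>ProdGrp D\<^esub> m n) \<one>\<^bsub>ProdGrp D\<^esub> sequentially"
    using limitin_ProdTop_iff[where D=D and f="\<lambda>n. g n [^]\<^bsub>ProdGrp D\<^esub> m n"] by blast
qed

section \<open>Part (2): super-multipliable sequences of the restricted product\<close>

text \<open>Choosing the exponents 1 on a set S and 0 elsewhere, super-multipliability in H says: in
  each coordinate, the products of the selected terms are eventually equal to l i, for some l in H.\<close>
lemma selective_products_converge:
  assumes grp: "\<And>i. group (D i)" and g: "\<And>n. g n \<in> carrier (SumGrp D)"
    and sm: "super_multipliable (SumGrp D) (SumTop D) g"
  obtains l where "l \<in> FinSupp D"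
    and "\<And>i. eventually (\<lambda>n. pprod (D i) (\<lambda>k. if k \<in> S then g k i else \<one>\<^bsub>D i\<^esub>) n = l i)
                sequentially"
proof -
  have gP: "g k \<in> carrier (ProdGrp D)" for k using g by (simp add: carrier_SumGrp FinSupp_def)
  define m where "m k = (if k \<in> S then 1 else 0 :: int)" for k
  define a where "a k = (if k \<in> S then g k else \<one>\<^bsub>ProdGrp D\<^esub>)" for k
  have terms: "g k [^]\<^bsub>SumGrp D\<^esub> m k = a k" for k
    by (simp add: m_def a_def int_pow_one_SumGrp[where D=D, OF grp gP] one_SumGrp one_ProdGrp)
  have "\<forall>k. m k \<in> {0, 1}" by (simp add: m_def)
  with sm obtain l where
    "limitin (SumTop D) (\<lambda>n. pprod (SumGrp D) (\<lambda>k. g k [^]\<^bsub>SumGrp D\<^esub> m k) n) l sequentially"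
    unfolding super_multipliable_def by blast
  then have l: "l \<in> FinSupp D" and lim: "limitin (ProdTop D) (\<lambda>n. pprod (ProdGrp D) a n) l sequentially"
    unfolding SumTop_def limitin_subtopology terms pprod_SumGrp by auto
  have "a k \<in> carrier (ProdGrp D)" for k
    using gP group.is_monoid[OF group_ProdGrp[where D=D, OF grp]] by (simp add: a_def monoid.one_closed)
  then have products: "pprod (ProdGrp D) a n \<in> carrier (ProdGrp D)" for n
    using pprod_closed[OF group.is_monoid[OF group_ProdGrp[where D=D, OF grp]]] by blast
  have "(\<lambda>k. a k i) = (\<lambda>k. if k \<in> S then g k i else \<one>\<^bsub>D i\<^esub>)" for i
    by (simp add: a_def one_ProdGrp fun_eq_iff)
  moreover have "\<forall>i. eventually (\<lambda>n. pprod (ProdGrp D) a n i = l i) sequentially"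
    using lim limitin_ProdTop_iff[where D=D and f="\<lambda>n. pprod (ProdGrp D) a n", OF products] by blast
  ultimately show thesis
    using that[OF l] by (simp add: pprod_coord)
qed

text \<open>With all exponents 1 the products converge, so every coordinate of g n is eventually
  neutral.\<close>
lemma super_multipliable_coordinates_vanish:
  assumes grp: "\<And>i. group (D i)" and g: "\<And>n. g n \<in> carrier (SumGrp D)"
    and sm: "super_multipliable (SumGrp D) (SumTop D) g"
  shows "eventually (\<lambda>n. g n i = \<one>\<^bsub>D i\<^esub>) sequentially"
proof -
  have gi: "g n i \<in> carrier (D i)" for n
    using g by (simp add: carrier_SumGrp FinSupp_def carrier_ProdGrp)
  obtain l where "eventually (\<lambda>n. pprod (D i) (\<lambda>k. if k \<in> UNIV then g k i else \<one>\<^bsub>D i\<^esub>) n = l i)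
      sequentially"
    using selective_products_converge[where D=D, OF grp g sm] by metis
  then have "eventually (\<lambda>n. pprod (D i) (\<lambda>k. g k i) n = l i) sequentially" by simp
  then show ?thesis
    by (rule pprod_eventually_const_imp_factors[OF grp[of i], of "\<lambda>k. g k i", OF gi])
qed

lemma super_multipliable_eventually_neutral:
  assumes grp: "\<And>i. group (D i)" and g: "\<And>n. g n \<in> carrier (SumGrp D)"
    and sm: "super_multipliable (SumGrp D) (SumTop D) g"
  shows "eventually_neutral (SumGrp D) g"
proof (rule ccontr)
  assume not_neutral: "\<not> eventually_neutral (SumGrp D) g"
  define A where "A n = coord_support D (g n)" for n
  have gi: "g n i \<in> carrier (D i)" for n i
    using g by (simp add: carrier_SumGrp FinSupp_def carrier_ProdGrp)
  have fin: "finite (A n)" for n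
    using g by (simp add: A_def coord_support_def carrier_SumGrp FinSupp_def)
  have "{n. g n \<noteq> \<one>\<^bsub>SumGrp D\<^esub>} = {n. A n \<noteq> {}}"
    by (auto simp: A_def coord_support_def one_SumGrp fun_eq_iff)
  then have inf: "infinite {n. A n \<noteq> {}}"
    using not_neutral by (simp add: eventually_neutral_def)
  have vanish: "eventually (\<lambda>n. i \<notin> A n) sequentially" for i
    using super_multipliable_coordinates_vanish[where D=D, OF grp g sm]
    by (simp add: A_def coord_support_def)
  obtain K :: "nat \<Rightarrow> nat" where nonempty: "\<And>j. A (K j) \<noteq> {}"
    and disjoint: "\<And>j j'. j \<noteq> j' \<Longrightarrow> A (K j) \<inter> A (K j') = {}"
    using disjoint_subsequence[OF fin vanish inf] by blast
  txt \<open>Multiply exactly the terms g (K j); the limit l agrees with each g (K j) on its support.\<close>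
  obtain l where l: "l \<in> FinSupp D" and lim: "\<And>i. eventually
      (\<lambda>n. pprod (D i) (\<lambda>k. if k \<in> range K then g k i else \<one>\<^bsub>D i\<^esub>) n = l i) sequentially"
    using selective_products_converge[where D=D, OF grp g sm] by metis
  have "A (K j) \<subseteq> coord_support D l" for j
  proof
    fix i assume i: "i \<in> A (K j)"
    have "g k i = \<one>\<^bsub>D i\<^esub>" if "k \<in> range K" "k \<noteq> K j" for k
    proof -
      obtain j' where k: "k = K j'" using \<open>k \<in> range K\<close> by blast
      with that have "j' \<noteq> j" by blast
      then have "i \<notin> A (K j')" using disjoint[of j' j] i by blast
      then show ?thesis using k by (simp add: A_def coord_support_def)
    qed
    then have "l i = g (K j) i"
      by (rule pprod_selected_single_limit[OF group.is_monoid[OF grp[of i]],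
            where b="\<lambda>k. g k i" and S="range K" and p="K j", OF rangeI gi _ lim[of i]])
    with i show "i \<in> coord_support D l" by (simp add: A_def coord_support_def)
  qed
  then have "(\<Union>j. A (K j)) \<subseteq> coord_support D l" by blast
  moreover have "finite (coord_support D l)" using l by (simp add: FinSupp_def coord_support_def)
  ultimately show False
    using disjoint_family_union_infinite[of "\<lambda>j. A (K j)"] nonempty disjoint finite_subset by blast
qed

lemma hyper_multipliable_imp_super_multipliable:
  "hyper_multipliable G X g \<Longrightarrow> super_multipliable G X g"
  by (simp add: hyper_multipliable_def super_multipliable_def)

theorem proposition2p4:
  fixes D :: "nat \<Rightarrow> 'a monoid"
  assumes grp: "\<And>i. group (D i)"
    and nontriv: "\<And>i. \<exists>x \<in> carrier (D i). x \<noteq> \<one>\<^bsub>D i\<^esub>"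
  shows "(\<forall>g. (\<forall>n. g n \<in> carrier (ProdGrp D)) \<and>
              limitin (ProdTop D) g \<one>\<^bsub>ProdGrp D\<^esub> sequentially \<longrightarrow>
            hyper_multipliable (ProdGrp D) (ProdTop D) g \<and>
            hyper_converging (ProdGrp D) (ProdTop D) g)
       \<and> (\<forall>g. (\<forall>n. g n \<in> carrier (SumGrp D)) \<and>
              super_multipliable (SumGrp D) (SumTop D) g \<longrightarrow>
            eventually_neutral (SumGrp D) g)
       \<and> (\<forall>g. (\<forall>n. g n \<in> carrier (SumGrp D)) \<and>
              hyper_multipliable (SumGrp D) (SumTop D) g \<longrightarrow>
            eventually_neutral (SumGrp D) g)"
  using null_sequence_hyper_multipliable[where D=D, OF grp] null_sequence_hyper_converging[where D=D, OF grp]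
    super_multipliable_eventually_neutral[where D=D, OF grp] hyper_multipliable_imp_super_multipliable
  by blast

end
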